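(* Let $M$ be a proper metric space and $\mathcal{X},\mathcal{Y}$ big families in $M$. Then $$0\to CX_\bullet(\mathcal{X}\Cap\mathcal{Y})\to CX_\bullet(\mathcal{X})\oplus CX_\bullet(\mathcal{Y})\to CX_\bullet(\mathcal{X}\Cup\mathcal{Y})\to0$$ is a short exact sequence of chain complexes, where the first map is the diagonal inclusion $\mu\mapsto(\mu,\mu)$ and the second is $(\mu_1,\mu_2)\mapsto\mu_1-\mu_2$. The same holds with each complex replaced by its quotient complex $CX^\alpha_\bullet$ of anti-symmetric coarse chains.
   Context: A big family is a collection of subsets closed under subsets, finite unions and $R$-thickenings; $\mathcal{X}\Cap\mathcal{Y}$ and $\mathcal{X}\Cup\mathcal{Y}$ denote elementwise intersections and unions. With $M^{n+1}$ carrying the max metric and $\Delta_R$ the $R$-thickening of the multi-diagonal, a coarse $n$-chain is a complex-valued locally finite regular Borel measure on $M^{n+1}$ supported in some $\Delta_R$; $CX_n(\mathcal{Y})$ consists of those vanishing outside $Y^{n+1}$ for some $Y\in\mathcal{Y}$; differential $\partial\mu=\sum_i(-1)^i(\pi_i)_*\mu$ with $\pi_i$ omitting coordinate $i$. $CX^\alpha_n(\mathcal{Y})$ is the quotient of $CX_n(\mathcal{Y})$ identifying measures that arise from each other by a signed permutation of the variables (equivalently, identifying measures with equal integrals against all anti-symmetric coarse cochains on $\mathcal{Y}$). *)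

theory Defs
  imports "HOL-Analysis.Analysis"
begin

text \<open>Points of M^(n+1) are extensional functions on indices 0..n.\<close>
definition tup :: "nat \<Rightarrow> (nat \<Rightarrow> 'a) set" where
  "tup n = PiE {..n} (\<lambda>_. UNIV)"

definition tdist :: "nat \<Rightarrow> (nat \<Rightarrow> 'a::metric_space) \<Rightarrow> (nat \<Rightarrow> 'a) \<Rightarrow> real" where
  "tdist n x y = Max ((\<lambda>i. dist (x i) (y i)) ` {..n})"

definition tbounded :: "nat \<Rightarrow> (nat \<Rightarrow> 'a::metric_space) set \<Rightarrow> bool" where
  "tbounded n A \<longleftrightarrow> A \<subseteq> tup n \<and> (\<exists>x\<in>tup n. \<exists>r. \<forall>y\<in>A. tdist n x y \<le> r)"

text \<open>Borel sets of M^(n+1) (product sigma algebra = Borel, M being separable).\<close>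
definition tborel :: "nat \<Rightarrow> (nat \<Rightarrow> 'a::metric_space) set set" where
  "tborel n = sets (PiM {..n} (\<lambda>_. borel))"

text \<open>Bounded Borel sets: the domain of a locally finite complex measure.\<close>
definition bbsets :: "nat \<Rightarrow> (nat \<Rightarrow> 'a::metric_space) set set" where
  "bbsets n = {A \<in> tborel n. tbounded n A}"

definition diag_thick :: "nat \<Rightarrow> real \<Rightarrow> (nat \<Rightarrow> 'a::metric_space) set" where
  "diag_thick n R = {x \<in> tup n. \<exists>m. \<forall>i\<le>n. dist (x i) m \<le> R}"

definition vanishes_outside :: "nat \<Rightarrow> ((nat \<Rightarrow> 'a::metric_space) set \<Rightarrow> complex) \<Rightarrow> (nat \<Rightarrow> 'a) set \<Rightarrow> bool" where
  "vanishes_outside n \<mu> S \<longleftrightarrow> (\<forall>C\<in>bbsets n. C \<inter> S = {} \<longrightarrow> \<mu> C = 0)"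

definition cm_countably_additive :: "nat \<Rightarrow> ((nat \<Rightarrow> 'a::metric_space) set \<Rightarrow> complex) \<Rightarrow> bool" where
  "cm_countably_additive n \<mu> \<longleftrightarrow>
     (\<forall>A :: nat \<Rightarrow> (nat \<Rightarrow> 'a) set. (\<forall>k. A k \<in> bbsets n) \<longrightarrow> disjoint_family A \<longrightarrow>
        (\<Union>k. A k) \<in> bbsets n \<longrightarrow> (\<lambda>k. \<mu> (A k)) sums \<mu> (\<Union>k. A k))"

text \<open>Regularity (inner by compact, outer by open sets), expressed through the
  variation on bounded Borel sets.\<close>
definition cm_regular :: "nat \<Rightarrow> ((nat \<Rightarrow> 'a::metric_space) set \<Rightarrow> complex) \<Rightarrow> bool" where
  "cm_regular n \<mu> \<longleftrightarrow>
     (\<forall>A\<in>bbsets n. \<forall>e>0. \<exists>K U. compact K \<and> K \<subseteq> A \<and> open U \<and> A \<subseteq> U \<and>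
        (\<forall>C\<in>bbsets n. C \<subseteq> U - K \<longrightarrow> cmod (\<mu> C) < e))"

text \<open>A coarse n-chain: a complex-valued locally finite regular Borel measure on M^(n+1),
  given by its values on bounded Borel sets (value 0 by convention elsewhere),
  supported in some thickened diagonal.\<close>
definition coarse_chain :: "nat \<Rightarrow> ((nat \<Rightarrow> 'a::metric_space) set \<Rightarrow> complex) \<Rightarrow> bool" where
  "coarse_chain n \<mu> \<longleftrightarrow>
     (\<forall>A. A \<notin> bbsets n \<longrightarrow> \<mu> A = 0) \<and> cm_countably_additive n \<mu> \<and> cm_regular n \<mu> \<and>
     (\<exists>R. vanishes_outside n \<mu> (diag_thick n R))"

definition thickening :: "real \<Rightarrow> 'a::metric_space set \<Rightarrow> 'a set" where
  "thickening R Y = {x. \<exists>y\<in>Y. dist x y \<le> R}"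

definition big_family :: "'a::metric_space set set \<Rightarrow> bool" where
  "big_family \<Y> \<longleftrightarrow> {} \<in> \<Y> \<and>
     (\<forall>Y\<in>\<Y>. \<forall>Z. Z \<subseteq> Y \<longrightarrow> Z \<in> \<Y>) \<and>
     (\<forall>Y\<in>\<Y>. \<forall>Z\<in>\<Y>. Y \<union> Z \<in> \<Y>) \<and>
     (\<forall>Y\<in>\<Y>. \<forall>R\<ge>0. thickening R Y \<in> \<Y>)"

definition fam_Int :: "'a set set \<Rightarrow> 'a set set \<Rightarrow> 'a set set" where
  "fam_Int \<X> \<Y> = {X \<inter> Y | X Y. X \<in> \<X> \<and> Y \<in> \<Y>}"

definition fam_Un :: "'a set set \<Rightarrow> 'a set set \<Rightarrow> 'a set set" where
  "fam_Un \<X> \<Y> = {X \<union> Y | X Y. X \<in> \<X> \<and> Y \<in> \<Y>}"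

definition CX :: "nat \<Rightarrow> 'a::metric_space set set \<Rightarrow> ((nat \<Rightarrow> 'a) set \<Rightarrow> complex) set" where
  "CX n \<Y> = {\<mu>. coarse_chain n \<mu> \<and> (\<exists>Y\<in>\<Y>. vanishes_outside n \<mu> (PiE {..n} (\<lambda>_. Y)))}"

definition face :: "nat \<Rightarrow> nat \<Rightarrow> (nat \<Rightarrow> 'a) \<Rightarrow> (nat \<Rightarrow> 'a)" where
  "face n i x = (\<lambda>j. if j < n then x (if j < i then j else Suc j) else undefined)"

text \<open>Pairwise thickened diagonal, containing diag_thick n R when S = 2R; used only to
  cut the preimage down to a bounded set (the measure vanishes outside it).\<close>
definition pair_thick :: "nat \<Rightarrow> real \<Rightarrow> (nat \<Rightarrow> 'a::metric_space) set" where
  "pair_thick n S = {x \<in> tup n. \<forall>i\<le>n. \<forall>j\<le>n. dist (x i) (x j) \<le> S}"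

definition push_face :: "nat \<Rightarrow> nat \<Rightarrow> ((nat \<Rightarrow> 'a::metric_space) set \<Rightarrow> complex) \<Rightarrow> (nat \<Rightarrow> 'a) set \<Rightarrow> complex" where
  "push_face n i \<mu> B =
     (if B \<in> bbsets (n - 1)
      then \<mu> (face n i -` B \<inter> pair_thick n (2 * (SOME R. vanishes_outside n \<mu> (diag_thick n R))))
      else 0)"

definition bdry :: "nat \<Rightarrow> ((nat \<Rightarrow> 'a::metric_space) set \<Rightarrow> complex) \<Rightarrow> (nat \<Rightarrow> 'a) set \<Rightarrow> complex" where
  "bdry n \<mu> = (\<lambda>B. \<Sum>i\<le>n. (-1) ^ i * push_face n i \<mu> B)"

definition perm_chain :: "(nat \<Rightarrow> nat) \<Rightarrow> ((nat \<Rightarrow> 'a) set \<Rightarrow> complex) \<Rightarrow> (nat \<Rightarrow> 'a) set \<Rightarrow> complex" where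
  "perm_chain \<sigma> \<mu> = (\<lambda>A. \<mu> ((\<lambda>x. x \<circ> \<sigma>) -` A))"

text \<open>The subspace of CX_n(Y) spanned by the differences mu - sign(sigma) sigma_* mu;
  CX^alpha_n(Y) is CX_n(Y) modulo this subspace.\<close>
definition CX_null :: "nat \<Rightarrow> 'a::metric_space set set \<Rightarrow> ((nat \<Rightarrow> 'a) set \<Rightarrow> complex) set" where
  "CX_null n \<Y> = {\<nu>. \<exists>(k::nat) \<mu>s \<sigma>s. (\<forall>j<k. \<mu>s j \<in> CX n \<Y> \<and> \<sigma>s j permutes {..n}) \<and>
      \<nu> = (\<lambda>A. \<Sum>j<k. \<mu>s j A - of_int (sign (\<sigma>s j)) * perm_chain (\<sigma>s j) (\<mu>s j) A)}"

end

(*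
  Most exactness statements are formal once one knows that a chain supported in both
  X^(n+1) and Y^(n+1) is supported in (closure X Int closure Y)^(n+1), and big families are
  closed under closures. The real point is surjectivity onto CX(X Cup Y): if nu lives on
  (X Un Y)^(n+1) within distance R of the diagonal, a point of its support with one coordinate
  near X has all coordinates in the closed (2R+1)-neighbourhood X' of X. So restricting nu to
  X'^(n+1) gives a chain in CX(X) whose difference with nu lives on (closure Y)^(n+1).

  For the anti-symmetric quotients, CX_null is exactly the kernel of the anti-symmetrisation
  sum_sigma sign(sigma) sigma_* mu, and every chain is congruent modulo CX_null to its
  normalised anti-symmetrisation; this reduces each statement to the one for plain chains.
*)
theory Submission
  imports Defs
begin

section \<open>Bounded Borel sets of tuples\<close>

lemma space_PiM_borel:
  "space (PiM {..n} (\<lambda>_. borel)) = (tup n :: (nat \<Rightarrow> 'a::topological_space) set)"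
  by (simp add: space_PiM tup_def)

lemma tborel_subset_tup: "A \<in> tborel n \<Longrightarrow> A \<subseteq> tup n"
  unfolding tborel_def using sets.sets_into_space space_PiM_borel by metis

lemma tup_in_tborel: "tup n \<in> tborel n"
  unfolding tborel_def using sets.top space_PiM_borel by metis

lemma tborel_Int: "A \<in> tborel n \<Longrightarrow> B \<in> tborel n \<Longrightarrow> A \<inter> B \<in> tborel n"
  and tborel_Diff: "A \<in> tborel n \<Longrightarrow> B \<in> tborel n \<Longrightarrow> A - B \<in> tborel n"
  unfolding tborel_def by auto

lemma tborel_countable_UN:
  "countable I \<Longrightarrow> (\<And>i. i \<in> I \<Longrightarrow> A i \<in> tborel n) \<Longrightarrow> (\<Union>i\<in>I. A i) \<in> tborel n"
  unfolding tborel_def by (rule sets.countable_UN'')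

lemma tborel_countable_INT:
  "countable I \<Longrightarrow> I \<noteq> {} \<Longrightarrow> (\<And>i. i \<in> I \<Longrightarrow> A i \<in> tborel n) \<Longrightarrow> (\<Inter>i\<in>I. A i) \<in> tborel n"
  unfolding tborel_def by (rule sets.countable_INT') auto

lemma coordinate_set_in_tborel:
  "i \<le> n \<Longrightarrow> B \<in> sets borel \<Longrightarrow> {x \<in> tup n. x i \<in> B} \<in> tborel n"
  using sets_Collect_single[of i "{..n}" B "\<lambda>_. borel"] by (simp add: tborel_def space_PiM_borel)

lemma PiE_closed_in_tborel: "closed Z \<Longrightarrow> PiE {..n} (\<lambda>_. Z) \<in> tborel n"
  unfolding tborel_def by (rule sets_PiM_I_finite) auto

lemma tbounded_iff:
  "tbounded n A \<longleftrightarrow> A \<subseteq> tup n \<and> (\<exists>p r. \<forall>y\<in>A. \<forall>i\<le>n. dist (y i) p \<le> r)"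
proof
  assume "tbounded n A"
  then obtain x r where A: "A \<subseteq> tup n" and r: "\<forall>y\<in>A. tdist n x y \<le> r"
    unfolding tbounded_def by blast
  define s where "s = (\<Sum>k\<le>n. dist (x k) (x 0))"
  have "dist (y i) (x 0) \<le> r + s" if "y \<in> A" "i \<le> n" for y i
  proof -
    have "dist (x i) (y i) \<le> tdist n x y"
      unfolding tdist_def using \<open>i \<le> n\<close> by (intro Max_ge) auto
    moreover have "dist (x i) (x 0) \<le> s"
      unfolding s_def using \<open>i \<le> n\<close> by (intro member_le_sum) auto
    ultimately show ?thesis
      using r \<open>y \<in> A\<close> dist_triangle3[of "y i" "x 0" "x i"] by auto
  qed
  with A show "A \<subseteq> tup n \<and> (\<exists>p r. \<forall>y\<in>A. \<forall>i\<le>n. dist (y i) p \<le> r)" by blast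
next
  assume "A \<subseteq> tup n \<and> (\<exists>p r. \<forall>y\<in>A. \<forall>i\<le>n. dist (y i) p \<le> r)"
  then obtain p r where A: "A \<subseteq> tup n" and r: "\<forall>y\<in>A. \<forall>i\<le>n. dist (y i) p \<le> r" by blast
  define x where "x = (\<lambda>i. if i \<le> n then p else undefined)"
  have "x \<in> tup n" by (auto simp: x_def tup_def PiE_def extensional_def)
  moreover have "tdist n x y \<le> r" if "y \<in> A" for y
    unfolding tdist_def using r that by (auto simp: x_def dist_commute)
  ultimately show "tbounded n A" using A unfolding tbounded_def by blast
qed

lemma bbsets_subset: "B \<in> bbsets n \<Longrightarrow> A \<in> tborel n \<Longrightarrow> A \<subseteq> B \<Longrightarrow> A \<in> bbsets n"
  by (auto simp: bbsets_def tbounded_iff) blast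

lemma bbsets_Int: "B \<in> bbsets n \<Longrightarrow> S \<in> tborel n \<Longrightarrow> B \<inter> S \<in> bbsets n"
  by (rule bbsets_subset[of B]) (auto simp: bbsets_def intro: tborel_Int)

lemma bbsets_Diff: "B \<in> bbsets n \<Longrightarrow> S \<in> tborel n \<Longrightarrow> B - S \<in> bbsets n"
  by (rule bbsets_subset[of B]) (auto simp: bbsets_def intro: tborel_Diff)

lemma empty_in_bbsets: "{} \<in> bbsets n"
  unfolding bbsets_def tbounded_iff tborel_def by auto

section \<open>Coarse chains\<close>

lemma vanishes_outside_mono: "vanishes_outside n \<mu> S \<Longrightarrow> S \<subseteq> T \<Longrightarrow> vanishes_outside n \<mu> T"
  unfolding vanishes_outside_def by blast

lemma diag_thick_mono: "R \<le> R' \<Longrightarrow> diag_thick n R \<subseteq> diag_thick n R'"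
  unfolding diag_thick_def by (auto intro: order_trans)

lemma diag_thick_subset_pair_thick: "diag_thick n R \<subseteq> pair_thick n (2 * R)"
proof
  fix x assume "x \<in> diag_thick n R"
  then obtain m where x: "x \<in> tup n" and m: "\<forall>i\<le>n. dist (x i) m \<le> R"
    unfolding diag_thick_def by blast
  have "dist (x i) (x j) \<le> 2 * R" if "i \<le> n" "j \<le> n" for i j
    using dist_triangle3[of "x i" "x j" m] m that by (smt (verit) dist_commute)
  then show "x \<in> pair_thick n (2 * R)"
    unfolding pair_thick_def using x by blast
qed

lemma pair_thick_mono: "S \<le> S' \<Longrightarrow> pair_thick n S \<subseteq> pair_thick n S'"
  unfolding pair_thick_def by force

lemma coarse_chainI:
  assumes "\<And>A. A \<notin> bbsets n \<Longrightarrow> \<mu> A = 0" "cm_countably_additive n \<mu>" "cm_regular n \<mu>"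
    "vanishes_outside n \<mu> (diag_thick n R)"
  shows "coarse_chain n \<mu>"
  using assms unfolding coarse_chain_def by blast

lemma coarse_chain_outside_bbsets: "coarse_chain n \<mu> \<Longrightarrow> A \<notin> bbsets n \<Longrightarrow> \<mu> A = 0"
  unfolding coarse_chain_def by blast

lemma coarse_chain_supportE:
  assumes "coarse_chain n \<mu>"
  obtains R0 where "\<And>R. R0 \<le> R \<Longrightarrow> vanishes_outside n \<mu> (diag_thick n R)"
proof -
  obtain R0 where "vanishes_outside n \<mu> (diag_thick n R0)"
    using assms unfolding coarse_chain_def by blast
  then show thesis
    using that diag_thick_mono vanishes_outside_mono by blast
qed

lemma coarse_chain_common_supportE:
  assumes "coarse_chain n \<mu>" "coarse_chain n \<nu>"
  obtains R where "vanishes_outside n \<mu> (diag_thick n R)" "vanishes_outside n \<nu> (diag_thick n R)"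
proof -
  obtain R1 where "\<And>R. R1 \<le> R \<Longrightarrow> vanishes_outside n \<mu> (diag_thick n R)"
    using coarse_chain_supportE[OF assms(1)] by blast
  moreover obtain R2 where "\<And>R. R2 \<le> R \<Longrightarrow> vanishes_outside n \<nu> (diag_thick n R)"
    using coarse_chain_supportE[OF assms(2)] by blast
  ultimately show thesis
    by (meson that max.cobounded1 max.cobounded2)
qed

lemma coarse_chain_sums:
  assumes "coarse_chain n \<mu>" "\<And>k. A k \<in> bbsets n" "disjoint_family A" "(\<Union>k. A k) \<in> bbsets n"
  shows "(\<lambda>k. \<mu> (A k)) sums \<mu> (\<Union>k. A k)"
  using assms unfolding coarse_chain_def cm_countably_additive_def by blast

lemma coarse_chain_regularE:
  assumes "coarse_chain n \<mu>" "A \<in> bbsets n" "0 < e"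
  obtains K U where "compact K" "K \<subseteq> A" "open U" "A \<subseteq> U"
    "\<And>C. C \<in> bbsets n \<Longrightarrow> C \<subseteq> U - K \<Longrightarrow> cmod (\<mu> C) < e"
  using assms unfolding coarse_chain_def cm_regular_def by meson

lemma coarse_chain_empty:
  assumes "coarse_chain n \<mu>" shows "\<mu> {} = 0"
proof -
  obtain R where "vanishes_outside n \<mu> (diag_thick n R)"
    using coarse_chain_supportE[OF assms] by blast
  then show ?thesis using empty_in_bbsets by (auto simp: vanishes_outside_def)
qed

lemma coarse_chain_split:
  assumes \<mu>: "coarse_chain n \<mu>" and C: "C \<in> bbsets n" and S: "S \<in> tborel n"
  shows "\<mu> C = \<mu> (C \<inter> S) + \<mu> (C - S)"
proof -
  define A where "A = (\<lambda>k::nat. if k = 0 then C \<inter> S else if k = 1 then C - S else {})"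
  have "A k \<in> bbsets n" for k
    using bbsets_Int[OF C S] bbsets_Diff[OF C S] empty_in_bbsets by (auto simp: A_def)
  moreover have "disjoint_family A" and "(\<Union>k. A k) = C"
    by (auto simp: A_def disjoint_family_on_def split: if_splits)
  ultimately have "(\<lambda>k. \<mu> (A k)) sums \<mu> C"
    using coarse_chain_sums[OF \<mu>, of A] C by simp
  moreover have "(\<lambda>k. \<mu> (A k)) sums (\<Sum>k\<in>{0, 1}. \<mu> (A k))"
    by (rule sums_finite) (auto simp: A_def coarse_chain_empty[OF \<mu>])
  ultimately show ?thesis by (simp add: sums_unique2 A_def)
qed

lemma vanishes_outside_Int:
  assumes \<mu>: "coarse_chain n \<mu>" and S: "S \<in> tborel n"
    and "vanishes_outside n \<mu> S" and "vanishes_outside n \<mu> T"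
  shows "vanishes_outside n \<mu> (S \<inter> T)"
  unfolding vanishes_outside_def
proof (intro ballI impI)
  fix C assume C: "C \<in> bbsets n" and disj: "C \<inter> (S \<inter> T) = {}"
  have "\<mu> (C - S) = 0"
    using assms(3) bbsets_Diff[OF C S] unfolding vanishes_outside_def by blast
  moreover have "\<mu> (C \<inter> S) = 0"
    using assms(4) bbsets_Int[OF C S] disj unfolding vanishes_outside_def by blast
  ultimately show "\<mu> C = 0" using coarse_chain_split[OF \<mu> C S] by simp
qed

lemma coarse_chain_zero: "coarse_chain n (\<lambda>_::(nat \<Rightarrow> 'a::metric_space) set. 0)"
  unfolding coarse_chain_def cm_countably_additive_def cm_regular_def vanishes_outside_def
proof (intro conjI allI impI ballI)
  fix A :: "(nat \<Rightarrow> 'a) set" and e :: real assume "0 < e"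
  then show "\<exists>K U. compact K \<and> K \<subseteq> A \<and> open U \<and> A \<subseteq> U \<and>
      (\<forall>C\<in>bbsets n. C \<subseteq> U - K \<longrightarrow> cmod 0 < e)"
    by (intro exI[of _ "{}"] exI[of _ UNIV]) auto
qed auto

lemma cm_regular_lincomb:
  fixes \<mu> \<nu> :: "(nat \<Rightarrow> 'a::metric_space) set \<Rightarrow> complex"
  assumes \<mu>: "coarse_chain n \<mu>" and \<nu>: "coarse_chain n \<nu>"
  shows "cm_regular n (\<lambda>A. a * \<mu> A + b * \<nu> A)"
  unfolding cm_regular_def
proof (intro ballI allI impI)
  fix A :: "(nat \<Rightarrow> 'a) set" and e :: real assume A: "A \<in> bbsets n" and "0 < e"
  have pos: "0 < cmod a + cmod b + 1"
    using norm_ge_zero[of a] norm_ge_zero[of b] by linarith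
  define d where "d = e / (cmod a + cmod b + 1)"
  have "0 < d" using \<open>0 < e\<close> pos by (simp add: d_def)
  obtain K1 U1 where KU1: "compact K1" "K1 \<subseteq> A" "open U1" "A \<subseteq> U1"
    "\<And>C. C \<in> bbsets n \<Longrightarrow> C \<subseteq> U1 - K1 \<Longrightarrow> cmod (\<mu> C) < d"
    using coarse_chain_regularE[OF \<mu> A \<open>0 < d\<close>] by blast
  obtain K2 U2 where KU2: "compact K2" "K2 \<subseteq> A" "open U2" "A \<subseteq> U2"
    "\<And>C. C \<in> bbsets n \<Longrightarrow> C \<subseteq> U2 - K2 \<Longrightarrow> cmod (\<nu> C) < d"
    using coarse_chain_regularE[OF \<nu> A \<open>0 < d\<close>] by blast
  have "cmod (a * \<mu> C + b * \<nu> C) < e" if "C \<in> bbsets n" "C \<subseteq> (U1 \<inter> U2) - (K1 \<union> K2)" for C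
  proof -
    have "cmod (\<mu> C) \<le> d" "cmod (\<nu> C) \<le> d"
      using KU1(5) KU2(5) that by (auto intro: less_imp_le)
    have "cmod (a * \<mu> C + b * \<nu> C) \<le> cmod a * cmod (\<mu> C) + cmod b * cmod (\<nu> C)"
      using norm_triangle_ineq[of "a * \<mu> C" "b * \<nu> C"] by (simp add: norm_mult)
    also have "\<dots> \<le> cmod a * d + cmod b * d"
      using \<open>cmod (\<mu> C) \<le> d\<close> \<open>cmod (\<nu> C) \<le> d\<close> by (intro add_mono mult_left_mono) auto
    also have "\<dots> < (cmod a + cmod b + 1) * d"
      using \<open>0 < d\<close> by (simp add: algebra_simps)
    also have "\<dots> = e"
      using pos by (simp add: d_def)
    finally show ?thesis .
  qed
  then show "\<exists>K U. compact K \<and> K \<subseteq> A \<and> open U \<and> A \<subseteq> U \<and>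
      (\<forall>C\<in>bbsets n. C \<subseteq> U - K \<longrightarrow> cmod (a * \<mu> C + b * \<nu> C) < e)"
    using KU1(1-4) KU2(1-4)
    by (intro exI[of _ "K1 \<union> K2"] exI[of _ "U1 \<inter> U2"] conjI ballI impI compact_Un open_Int) auto
qed

lemma coarse_chain_lincomb:
  fixes \<mu> \<nu> :: "(nat \<Rightarrow> 'a::metric_space) set \<Rightarrow> complex"
  assumes \<mu>: "coarse_chain n \<mu>" and \<nu>: "coarse_chain n \<nu>"
  shows "coarse_chain n (\<lambda>A. a * \<mu> A + b * \<nu> A)"
proof -
  have "cm_countably_additive n (\<lambda>A. a * \<mu> A + b * \<nu> A)"
    unfolding cm_countably_additive_def
    by (intro allI impI sums_add sums_mult coarse_chain_sums[OF \<mu>] coarse_chain_sums[OF \<nu>]) auto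
  moreover obtain R where "vanishes_outside n \<mu> (diag_thick n R)" "vanishes_outside n \<nu> (diag_thick n R)"
    by (rule coarse_chain_common_supportE[OF \<mu> \<nu>])
  then have "vanishes_outside n (\<lambda>A. a * \<mu> A + b * \<nu> A) (diag_thick n R)"
    unfolding vanishes_outside_def by simp
  ultimately show ?thesis
    using coarse_chain_outside_bbsets[OF \<mu>] coarse_chain_outside_bbsets[OF \<nu>] cm_regular_lincomb[OF \<mu> \<nu>]
    by (intro coarse_chainI[where R = R]) auto
qed

lemma coarse_chain_scale: "coarse_chain n \<mu> \<Longrightarrow> coarse_chain n (\<lambda>A. c * \<mu> A)"
  using coarse_chain_lincomb[of n \<mu> \<mu> c 0] by simp

lemma coarse_chain_diff:
  "coarse_chain n \<mu> \<Longrightarrow> coarse_chain n \<nu> \<Longrightarrow> coarse_chain n (\<lambda>A. \<mu> A - \<nu> A)"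
  using coarse_chain_lincomb[of n \<mu> \<nu> 1 "-1"] by simp

lemma coarse_chain_sum:
  "finite I \<Longrightarrow> (\<And>i. i \<in> I \<Longrightarrow> coarse_chain n (\<mu> i)) \<Longrightarrow> coarse_chain n (\<lambda>A. \<Sum>i\<in>I. \<mu> i A)"
proof (induction I rule: finite_induct)
  case empty
  then show ?case using coarse_chain_zero by simp
next
  case (insert i I)
  then show ?case using coarse_chain_lincomb[of n "\<mu> i" "\<lambda>A. \<Sum>i\<in>I. \<mu> i A" 1 1] by simp
qed

definition restrict_chain ::
    "nat \<Rightarrow> ((nat \<Rightarrow> 'a::metric_space) set \<Rightarrow> complex) \<Rightarrow> (nat \<Rightarrow> 'a) set \<Rightarrow> (nat \<Rightarrow> 'a) set \<Rightarrow> complex"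
  where "restrict_chain n \<mu> S = (\<lambda>A. if A \<in> bbsets n then \<mu> (A \<inter> S) else 0)"

lemma vanishes_outside_restrict_chain:
  assumes S: "S \<in> tborel n" and v: "vanishes_outside n \<mu> T"
  shows "vanishes_outside n (restrict_chain n \<mu> S) T"
  unfolding vanishes_outside_def
proof (intro ballI impI)
  fix C assume C: "C \<in> bbsets n" "C \<inter> T = {}"
  then have "C \<inter> S \<in> bbsets n" "C \<inter> S \<inter> T = {}" using bbsets_Int[OF _ S] by blast+
  then show "restrict_chain n \<mu> S C = 0"
    using v C(1) unfolding vanishes_outside_def restrict_chain_def by simp
qed

lemma cm_countably_additive_restrict_chain:
  fixes \<mu> :: "(nat \<Rightarrow> 'a::metric_space) set \<Rightarrow> complex"
  assumes \<mu>: "coarse_chain n \<mu>" and S: "S \<in> tborel n"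
  shows "cm_countably_additive n (restrict_chain n \<mu> S)"
  unfolding cm_countably_additive_def
proof (intro allI impI)
  fix A :: "nat \<Rightarrow> (nat \<Rightarrow> 'a) set"
  assume A: "\<forall>k. A k \<in> bbsets n" "disjoint_family A" "(\<Union>k. A k) \<in> bbsets n"
  have "(\<Union>k. A k) \<inter> S = (\<Union>k. A k \<inter> S)" by blast
  moreover have "disjoint_family (\<lambda>k. A k \<inter> S)"
    using A(2) unfolding disjoint_family_on_def by blast
  ultimately have "(\<lambda>k. \<mu> (A k \<inter> S)) sums \<mu> ((\<Union>k. A k) \<inter> S)"
    using coarse_chain_sums[OF \<mu>, of "\<lambda>k. A k \<inter> S"] A bbsets_Int[OF _ S] by simp
  then show "(\<lambda>k. restrict_chain n \<mu> S (A k)) sums restrict_chain n \<mu> S (\<Union>k. A k)"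
    using A by (simp add: restrict_chain_def)
qed

lemma cm_regular_restrict_chain:
  fixes \<mu> :: "(nat \<Rightarrow> 'a::metric_space) set \<Rightarrow> complex"
  assumes \<mu>: "coarse_chain n \<mu>" and S: "S \<in> tborel n"
  shows "cm_regular n (restrict_chain n \<mu> S)"
  unfolding cm_regular_def
proof (intro ballI allI impI)
  fix A :: "(nat \<Rightarrow> 'a) set" and e :: real assume A: "A \<in> bbsets n" and "0 < e"
  obtain K U where KU: "compact K" "K \<subseteq> A" "open U" "A \<subseteq> U"
    "\<And>C. C \<in> bbsets n \<Longrightarrow> C \<subseteq> U - K \<Longrightarrow> cmod (\<mu> C) < e"
    using coarse_chain_regularE[OF \<mu> A \<open>0 < e\<close>] by blast
  have "cmod (restrict_chain n \<mu> S C) < e" if "C \<in> bbsets n" "C \<subseteq> U - K" for C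
  proof -
    have "C \<inter> S \<subseteq> U - K" using that(2) by blast
    then show ?thesis
      using KU(5) bbsets_Int[OF that(1) S] that(1) by (simp add: restrict_chain_def)
  qed
  then show "\<exists>K U. compact K \<and> K \<subseteq> A \<and> open U \<and> A \<subseteq> U \<and>
      (\<forall>C\<in>bbsets n. C \<subseteq> U - K \<longrightarrow> cmod (restrict_chain n \<mu> S C) < e)"
    using KU(1-4) by (intro exI[of _ K] exI[of _ U] conjI ballI impI) auto
qed

lemma coarse_chain_restrict_chain:
  fixes \<mu> :: "(nat \<Rightarrow> 'a::metric_space) set \<Rightarrow> complex"
  assumes \<mu>: "coarse_chain n \<mu>" and S: "S \<in> tborel n"
  shows "coarse_chain n (restrict_chain n \<mu> S)"
proof -
  obtain R where "vanishes_outside n \<mu> (diag_thick n R)"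
    using coarse_chain_supportE[OF \<mu>] by blast
  then have "vanishes_outside n (restrict_chain n \<mu> S) (diag_thick n R)"
    by (rule vanishes_outside_restrict_chain[OF S])
  then show ?thesis
    using cm_countably_additive_restrict_chain[OF \<mu> S] cm_regular_restrict_chain[OF \<mu> S]
    by (intro coarse_chainI[where R = R]) (auto simp: restrict_chain_def)
qed

lemma vanishes_outside_diff_restrict_chain:
  assumes \<nu>: "coarse_chain n \<nu>" and S: "S \<in> tborel n"
    and v: "vanishes_outside n \<nu> T" and T: "T \<subseteq> S \<union> Z"
  shows "vanishes_outside n (\<lambda>A. restrict_chain n \<nu> S A - \<nu> A) Z"
  unfolding vanishes_outside_def
proof (intro ballI impI)
  fix C assume C: "C \<in> bbsets n" and "C \<inter> Z = {}"
  then have "(C - S) \<inter> T = {}" using T by blast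
  then have "\<nu> (C - S) = 0"
    using v bbsets_Diff[OF C S] unfolding vanishes_outside_def by blast
  then show "restrict_chain n \<nu> S C - \<nu> C = 0"
    using coarse_chain_split[OF \<nu> C S] C by (simp add: restrict_chain_def)
qed

lemma vanishes_outside_restrict_chain_self:
  "coarse_chain n \<mu> \<Longrightarrow> vanishes_outside n (restrict_chain n \<mu> S) S"
  by (simp add: vanishes_outside_def restrict_chain_def Int_commute coarse_chain_empty)

section \<open>Big families\<close>

lemma big_family_subset: "big_family \<F> \<Longrightarrow> X \<in> \<F> \<Longrightarrow> Z \<subseteq> X \<Longrightarrow> Z \<in> \<F>"
  and big_family_thickening: "big_family \<F> \<Longrightarrow> X \<in> \<F> \<Longrightarrow> 0 \<le> R \<Longrightarrow> thickening R X \<in> \<F>"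
  unfolding big_family_def by blast+

lemma closure_subset_thickening:
  assumes "0 < r" shows "closure X \<subseteq> thickening r X"
proof
  fix x assume "x \<in> closure X"
  then obtain y where "y \<in> X" "dist y x < r"
    using assms unfolding closure_approachable by blast
  then show "x \<in> thickening r X"
    unfolding thickening_def by (auto simp: dist_commute intro!: bexI[of _ y])
qed

lemma big_family_closure:
  assumes "big_family \<F>" "X \<in> \<F>" shows "closure X \<in> \<F>"
proof -
  have "thickening 1 X \<in> \<F>" using big_family_thickening[OF assms] by simp
  then show ?thesis
    using big_family_subset[OF assms(1)] closure_subset_thickening[of 1 X] by simp
qed

lemma vanishes_outside_PiE_mono:
  "vanishes_outside n \<mu> (PiE {..n} (\<lambda>_. Y)) \<Longrightarrow> Y \<subseteq> Y' \<Longrightarrow> vanishes_outside n \<mu> (PiE {..n} (\<lambda>_. Y'))"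
  by (erule vanishes_outside_mono) (rule PiE_mono)

lemma CX_imp_coarse_chain: "\<mu> \<in> CX n \<Y> \<Longrightarrow> coarse_chain n \<mu>"
  unfolding CX_def by blast

lemma CX_mono:
  assumes "\<forall>Y\<in>\<Y>. \<exists>Y'\<in>\<Y>'. Y \<subseteq> Y'"
  shows "CX n \<Y> \<subseteq> CX n \<Y>'"
proof
  fix \<mu> assume "\<mu> \<in> CX n \<Y>"
  then obtain Y where "coarse_chain n \<mu>" "Y \<in> \<Y>" "vanishes_outside n \<mu> (PiE {..n} (\<lambda>_. Y))"
    unfolding CX_def by blast
  moreover obtain Y' where "Y' \<in> \<Y>'" "Y \<subseteq> Y'" using assms \<open>Y \<in> \<Y>\<close> by blast
  ultimately show "\<mu> \<in> CX n \<Y>'"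
    unfolding CX_def by (blast intro: vanishes_outside_PiE_mono)
qed

lemma CX_fam_Int_subset: "CX n (fam_Int \<X> \<Y>) \<subseteq> CX n \<X> \<inter> CX n \<Y>"
  using CX_mono[of "fam_Int \<X> \<Y>" \<X> n] CX_mono[of "fam_Int \<X> \<Y>" \<Y> n]
  by (auto simp: fam_Int_def)

lemma fam_Un_commute: "fam_Un \<X> \<Y> = fam_Un \<Y> \<X>"
  unfolding fam_Un_def by blast

lemma CX_subset_fam_Un: "{} \<in> \<Y> \<Longrightarrow> CX n \<X> \<subseteq> CX n (fam_Un \<X> \<Y>)"
  by (rule CX_mono) (auto simp: fam_Un_def)

lemma CX_scale: "\<mu> \<in> CX n \<Y> \<Longrightarrow> (\<lambda>A. c * \<mu> A) \<in> CX n \<Y>"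
  unfolding CX_def vanishes_outside_def by (auto intro: coarse_chain_scale)

lemma CX_diff_fam_Un:
  assumes "\<mu>1 \<in> CX n \<X>" "\<mu>2 \<in> CX n \<Y>"
  shows "(\<lambda>A. \<mu>1 A - \<mu>2 A) \<in> CX n (fam_Un \<X> \<Y>)"
proof -
  obtain X where X: "X \<in> \<X>" "coarse_chain n \<mu>1" "vanishes_outside n \<mu>1 (PiE {..n} (\<lambda>_. X))"
    using assms(1) unfolding CX_def by blast
  obtain Y where Y: "Y \<in> \<Y>" "coarse_chain n \<mu>2" "vanishes_outside n \<mu>2 (PiE {..n} (\<lambda>_. Y))"
    using assms(2) unfolding CX_def by blast
  have "vanishes_outside n \<mu>1 (PiE {..n} (\<lambda>_. X \<union> Y))"
    and "vanishes_outside n \<mu>2 (PiE {..n} (\<lambda>_. X \<union> Y))"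
    using vanishes_outside_PiE_mono X(3) Y(3) by blast+
  then have "vanishes_outside n (\<lambda>A. \<mu>1 A - \<mu>2 A) (PiE {..n} (\<lambda>_. X \<union> Y))"
    unfolding vanishes_outside_def by simp
  moreover have "X \<union> Y \<in> fam_Un \<X> \<Y>" using X(1) Y(1) unfolding fam_Un_def by blast
  ultimately show ?thesis
    using coarse_chain_diff[OF X(2) Y(2)] unfolding CX_def by blast
qed

lemma CX_fam_Int:
  fixes \<X> \<Y> :: "'a::metric_space set set"
  assumes "big_family \<X>" "big_family \<Y>"
  shows "CX n (fam_Int \<X> \<Y>) = CX n \<X> \<inter> CX n \<Y>"
proof
  show "CX n \<X> \<inter> CX n \<Y> \<subseteq> CX n (fam_Int \<X> \<Y>)"
  proof
    fix \<mu> assume "\<mu> \<in> CX n \<X> \<inter> CX n \<Y>"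
    then obtain X Y where XY: "X \<in> \<X>" "Y \<in> \<Y>" and \<mu>: "coarse_chain n \<mu>"
      and "vanishes_outside n \<mu> (PiE {..n} (\<lambda>_. X))" "vanishes_outside n \<mu> (PiE {..n} (\<lambda>_. Y))"
      unfolding CX_def by blast
    then have "vanishes_outside n \<mu> (PiE {..n} (\<lambda>_. closure X))"
      and "vanishes_outside n \<mu> (PiE {..n} (\<lambda>_. closure Y))"
      using vanishes_outside_PiE_mono closure_subset by blast+
    then have "vanishes_outside n \<mu> (PiE {..n} (\<lambda>_. closure X) \<inter> PiE {..n} (\<lambda>_. closure Y))"
      by (intro vanishes_outside_Int[OF \<mu> PiE_closed_in_tborel]) simp_all
    then have "vanishes_outside n \<mu> (PiE {..n} (\<lambda>_. closure X \<inter> closure Y))"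
      by (simp add: PiE_Int)
    moreover have "closure X \<inter> closure Y \<in> fam_Int \<X> \<Y>"
      using XY big_family_closure assms unfolding fam_Int_def by blast
    ultimately show "\<mu> \<in> CX n (fam_Int \<X> \<Y>)"
      using \<mu> unfolding CX_def by blast
  qed
qed (rule CX_fam_Int_subset)

lemma PiE_Un_Int_diag_thick_subset:
  "PiE {..n} (\<lambda>_. closure X \<union> Z) \<inter> diag_thick n R
     \<subseteq> PiE {..n} (\<lambda>_. thickening (2 * R + 1) X) \<union> PiE {..n} (\<lambda>_. Z)"
proof
  fix x assume x: "x \<in> PiE {..n} (\<lambda>_. closure X \<union> Z) \<inter> diag_thick n R"
  show "x \<in> PiE {..n} (\<lambda>_. thickening (2 * R + 1) X) \<union> PiE {..n} (\<lambda>_. Z)"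
  proof (cases "x \<in> PiE {..n} (\<lambda>_. Z)")
    case False
    then obtain i where "i \<le> n" "x i \<in> closure X" using x by (auto simp: PiE_iff)
    then obtain y where y: "y \<in> X" "dist y (x i) < 1"
      unfolding closure_approachable by (meson zero_less_one)
    have "x j \<in> thickening (2 * R + 1) X" if "j \<le> n" for j
    proof -
      have "dist (x j) (x i) \<le> 2 * R"
        using x diag_thick_subset_pair_thick[of n R] \<open>i \<le> n\<close> that
        unfolding pair_thick_def by blast
      then have "dist (x j) y \<le> 2 * R + 1"
        using y dist_triangle[of "x j" y "x i"] by (simp add: dist_commute)
      then show ?thesis using y unfolding thickening_def by blast
    qed
    then show ?thesis using x by (auto simp: PiE_iff)
  qed simp
qed

lemma CX_fam_Un_decompose:
  fixes \<X> \<Y> :: "'a::metric_space set set"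
  assumes bX: "big_family \<X>" and bY: "big_family \<Y>" and \<nu>: "\<nu> \<in> CX n (fam_Un \<X> \<Y>)"
  shows "\<exists>\<mu>1\<in>CX n \<X>. \<exists>\<mu>2\<in>CX n \<Y>. \<nu> = (\<lambda>A. \<mu>1 A - \<mu>2 A)"
proof -
  obtain X Y where X: "X \<in> \<X>" and Y: "Y \<in> \<Y>" and cc: "coarse_chain n \<nu>"
    and vXY: "vanishes_outside n \<nu> (PiE {..n} (\<lambda>_. X \<union> Y))"
    using \<nu> unfolding CX_def fam_Un_def by blast
  have vP: "vanishes_outside n \<nu> (PiE {..n} (\<lambda>_. closure X \<union> closure Y))"
    by (rule vanishes_outside_PiE_mono[OF vXY]) (intro Un_mono closure_subset)
  have P: "PiE {..n} (\<lambda>_. closure X \<union> closure Y) \<in> tborel n"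
    by (intro PiE_closed_in_tborel closed_Un closed_closure)
  obtain R0 where R0: "\<And>R. R0 \<le> R \<Longrightarrow> vanishes_outside n \<nu> (diag_thick n R)"
    using coarse_chain_supportE[OF cc] by blast
  define R where "R = max R0 0"
  have "0 \<le> R" and vR: "vanishes_outside n \<nu> (diag_thick n R)"
    using R0[of R] by (simp_all add: R_def)
  define X' where "X' = closure (thickening (2 * R + 1) X)"
  define S where "S = PiE {..n} (\<lambda>_. X')"
  have S: "S \<in> tborel n"
    unfolding S_def X'_def by (intro PiE_closed_in_tborel) simp
  define \<mu>1 where "\<mu>1 = restrict_chain n \<nu> S"
  have cc1: "coarse_chain n \<mu>1"
    unfolding \<mu>1_def by (rule coarse_chain_restrict_chain[OF cc S])
  have "X' \<in> \<X>"
    using \<open>0 \<le> R\<close> X bX unfolding X'_def by (simp add: big_family_closure big_family_thickening)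
  moreover have "vanishes_outside n \<mu>1 (PiE {..n} (\<lambda>_. X'))"
    unfolding \<mu>1_def S_def[symmetric] by (rule vanishes_outside_restrict_chain_self[OF cc])
  ultimately have m1: "\<mu>1 \<in> CX n \<X>"
    using cc1 unfolding CX_def by blast
  have "PiE {..n} (\<lambda>_. thickening (2 * R + 1) X) \<subseteq> S"
    unfolding S_def X'_def by (intro PiE_mono closure_subset)
  then have "PiE {..n} (\<lambda>_. closure X \<union> closure Y) \<inter> diag_thick n R \<subseteq> S \<union> PiE {..n} (\<lambda>_. closure Y)"
    using PiE_Un_Int_diag_thick_subset[of n X "closure Y" R] by blast
  then have "vanishes_outside n (\<lambda>A. \<mu>1 A - \<nu> A) (PiE {..n} (\<lambda>_. closure Y))"
    unfolding \<mu>1_def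
    by (rule vanishes_outside_diff_restrict_chain[OF cc S vanishes_outside_Int[OF cc P vP vR]])
  moreover have "closure Y \<in> \<Y>"
    by (rule big_family_closure[OF bY Y])
  ultimately have m2: "(\<lambda>A. \<mu>1 A - \<nu> A) \<in> CX n \<Y>"
    using coarse_chain_diff[OF cc1 cc] unfolding CX_def by blast
  show ?thesis
    using m1 m2 by (intro bexI[of _ \<mu>1] bexI[of _ "\<lambda>A. \<mu>1 A - \<nu> A"]) simp_all
qed

section \<open>The boundary is linear\<close>

lemma proper_countable_dense:
  assumes proper: "\<forall>(x::'a::metric_space) r. compact (cball x r)"
  obtains D :: "'a::metric_space set" where "countable D" "\<And>a e. 0 < e \<Longrightarrow> \<exists>d\<in>D. dist a d < e"
proof -
  fix x0 :: 'a
  have "\<exists>F. finite F \<and> cball x0 (real k) \<subseteq> (\<Union>c\<in>F. ball c (1 / Suc m))" for k m :: nat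
    using proper unfolding compact_eq_totally_bounded by simp
  then obtain F where F: "\<And>k m. finite (F k m)"
    "\<And>k m. cball x0 (real k) \<subseteq> (\<Union>c\<in>F k m. ball c (1 / Suc m))"
    by metis
  show thesis
  proof (rule that[of "\<Union>k m. F k m"])
    show "countable (\<Union>k m. F k m)"
      using F(1) by (simp add: countable_finite)
    fix a :: 'a and e :: real assume "0 < e"
    then obtain m where m: "1 / real (Suc m) < e" by (rule nat_approx_posE)
    obtain k :: nat where "dist x0 a \<le> real k" using real_arch_simple by blast
    then obtain c where c: "c \<in> F k m" "dist c a < 1 / Suc m"
      using F(2)[of k m] by (auto simp: subset_iff)
    have "c \<in> (\<Union>k m. F k m)" using c(1) by blast
    moreover have "dist a c < e" using c(2) m by (simp add: dist_commute)
    ultimately show "\<exists>d\<in>\<Union>k m. F k m. dist a d < e" by blast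
  qed
qed

lemma dist_le_iff_dense:
  assumes D: "\<And>a e. 0 < e \<Longrightarrow> \<exists>d\<in>D. dist a d < e"
  shows "dist a b \<le> S \<longleftrightarrow> (\<forall>m::nat. \<exists>d\<in>D. dist d a < 1 / Suc m \<and> dist d b < S + 1 / Suc m)"
proof
  assume ab: "dist a b \<le> S"
  show "\<forall>m::nat. \<exists>d\<in>D. dist d a < 1 / Suc m \<and> dist d b < S + 1 / Suc m"
  proof
    fix m :: nat
    obtain d where "d \<in> D" "dist d a < 1 / Suc m"
      using D[of "1 / Suc m" a] by (auto simp: dist_commute)
    then show "\<exists>d\<in>D. dist d a < 1 / Suc m \<and> dist d b < S + 1 / Suc m"
      using ab dist_triangle[of d b a] by (intro bexI[of _ d]) auto
  qed
next
  assume H: "\<forall>m::nat. \<exists>d\<in>D. dist d a < 1 / Suc m \<and> dist d b < S + 1 / Suc m"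
  show "dist a b \<le> S"
  proof (rule field_le_epsilon)
    fix e :: real assume "0 < e"
    then obtain m where m: "1 / real (Suc m) < e / 2" using nat_approx_posE half_gt_zero by metis
    obtain d where "dist d a < 1 / Suc m" "dist d b < S + 1 / Suc m" using H by blast
    then show "dist a b \<le> S + e"
      using m dist_triangle3[of a b d] by linarith
  qed
qed

(* The product sigma-algebra need not contain all closed sets; separability, which comes from
   properness, writes pair_thick as a countable combination of coordinate balls. *)
lemma pair_thick_in_tborel:
  assumes proper: "\<forall>(x::'a::metric_space) r. compact (cball x r)"
  shows "(pair_thick n S :: (nat \<Rightarrow> 'a) set) \<in> tborel n"
proof -
  obtain D :: "'a set" where D: "countable D" "\<And>a e. 0 < e \<Longrightarrow> \<exists>d\<in>D. dist a d < e"
    using proper_countable_dense[OF proper] by blast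
  define W :: "nat \<Rightarrow> nat \<Rightarrow> nat \<Rightarrow> 'a \<Rightarrow> (nat \<Rightarrow> 'a) set" where
    "W i j m d = {x \<in> tup n. dist d (x i) < 1 / Suc m \<and> dist d (x j) < S + 1 / Suc m}" for i j m d
  let ?I = "{..n} \<times> {..n} \<times> (UNIV :: nat set)"
  have "pair_thick n S = tup n \<inter> (\<Inter>(i, j, m)\<in>?I. \<Union>d\<in>D. W i j m d)"
    by (auto simp: pair_thick_def W_def dist_le_iff_dense[OF D(2)])
  moreover have "W i j m d \<in> tborel n" if "i \<le> n" "j \<le> n" for i j m d
  proof -
    have "W i j m d = {x \<in> tup n. x i \<in> ball d (1 / Suc m)} \<inter> {x \<in> tup n. x j \<in> ball d (S + 1 / Suc m)}"
      unfolding W_def by auto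
    then show ?thesis
      by (simp only:) (intro tborel_Int coordinate_set_in_tborel borel_open open_ball that)
  qed
  ultimately show ?thesis
    using D(1) by (auto intro!: tborel_Int tup_in_tborel tborel_countable_INT tborel_countable_UN)
qed

lemma face_measurable:
  assumes "0 < n"
  shows "face n i \<in> measurable (PiM {..n} (\<lambda>_. borel)) (PiM {..n - 1} (\<lambda>_. borel :: 'a::topological_space measure))"
  unfolding face_def
proof (rule measurable_PiM_single')
  fix j assume "j \<in> {..n - 1}"
  then have "j < n" using assms by auto
  then show "(\<lambda>x::nat \<Rightarrow> 'a. if j < n then x (if j < i then j else Suc j) else undefined)
      \<in> measurable (PiM {..n} (\<lambda>_. borel)) borel"
    by (auto intro!: measurable_component_singleton)
qed (use assms in \<open>auto simp: space_PiM PiE_def extensional_def\<close>)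

lemma face_vimage_pair_thick_in_bbsets:
  fixes B :: "(nat \<Rightarrow> 'a::metric_space) set"
  assumes proper: "\<forall>(x::'a) r. compact (cball x r)"
    and n: "0 < n" and i: "i \<le> n" and B: "B \<in> bbsets (n - 1)"
  shows "face n i -` B \<inter> pair_thick n (2 * R) \<in> bbsets n"
proof -
  have "face n i -` B \<inter> space (PiM {..n} (\<lambda>_. borel)) \<in> sets (PiM {..n} (\<lambda>_. borel))"
    by (rule measurable_sets[OF face_measurable[OF n]]) (use B in \<open>simp add: bbsets_def tborel_def\<close>)
  then have "face n i -` B \<inter> tup n \<in> tborel n"
    by (simp add: tborel_def space_PiM_borel)
  moreover have "face n i -` B \<inter> pair_thick n (2 * R) = (face n i -` B \<inter> tup n) \<inter> pair_thick n (2 * R)"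
    unfolding pair_thick_def by blast
  ultimately have meas: "face n i -` B \<inter> pair_thick n (2 * R) \<in> tborel n"
    using tborel_Int[OF _ pair_thick_in_tborel[OF proper]] by simp
  obtain p r where pr: "\<forall>y\<in>B. \<forall>j\<le>n - 1. dist (y j) p \<le> r"
    using B by (auto simp: bbsets_def tbounded_iff)
  \<comment> \<open>\<open>k0 \<noteq> i\<close>, so \<open>x k0\<close> survives in \<open>face n i x\<close>, as its coordinate \<open>0\<close>.\<close>
  define k0 :: nat where "k0 = (if i = 0 then 1 else 0)"
  have "dist (x k) p \<le> 2 * R + r" if "x \<in> face n i -` B \<inter> pair_thick n (2 * R)" "k \<le> n" for x k
  proof -
    have "face n i x 0 = x k0" using n by (simp add: face_def k0_def)
    then have "dist (x k0) p \<le> r" using pr that(1) by force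
    moreover have "dist (x k) (x k0) \<le> 2 * R"
      using that n i by (auto simp: pair_thick_def k0_def)
    ultimately show ?thesis using dist_triangle[of "x k" p "x k0"] by linarith
  qed
  then show ?thesis
    using meas tborel_subset_tup unfolding bbsets_def tbounded_iff by blast
qed

lemma coarse_chain_face_vimage_eq:
  fixes \<mu> :: "(nat \<Rightarrow> 'a::metric_space) set \<Rightarrow> complex"
  assumes proper: "\<forall>(x::'a) r. compact (cball x r)" and \<mu>: "coarse_chain n \<mu>"
    and n: "0 < n" and i: "i \<le> n" and B: "B \<in> bbsets (n - 1)"
    and v: "vanishes_outside n \<mu> (diag_thick n R0)" and "R0 \<le> R"
  shows "\<mu> (face n i -` B \<inter> pair_thick n (2 * R)) = \<mu> (face n i -` B \<inter> pair_thick n (2 * R0))"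
proof -
  let ?G = "\<lambda>R. face n i -` B \<inter> pair_thick n (2 * R)"
  have G: "?G R \<in> bbsets n" "?G R0 \<in> bbsets n"
    using face_vimage_pair_thick_in_bbsets[OF proper n i B] by blast+
  have G0: "?G R0 \<in> tborel n" using G(2) by (simp add: bbsets_def)
  have "?G R \<inter> ?G R0 = ?G R0"
    using pair_thick_mono[of "2 * R0" "2 * R" n] \<open>R0 \<le> R\<close> by auto
  moreover have "\<mu> (?G R - ?G R0) = 0"
  proof -
    have "(?G R - ?G R0) \<inter> diag_thick n R0 = {}"
      using diag_thick_subset_pair_thick[of n R0] by blast
    then show ?thesis
      using v bbsets_Diff[OF G(1) G0] unfolding vanishes_outside_def by blast
  qed
  ultimately show ?thesis
    using coarse_chain_split[OF \<mu> G(1) G0] by simp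
qed

(* push_face picks its radius by SOME; any other admissible radius gives the same value. *)
lemma push_face_eq:
  fixes \<mu> :: "(nat \<Rightarrow> 'a::metric_space) set \<Rightarrow> complex"
  assumes proper: "\<forall>(x::'a) r. compact (cball x r)" and \<mu>: "coarse_chain n \<mu>"
    and n: "0 < n" and i: "i \<le> n" and v: "vanishes_outside n \<mu> (diag_thick n R)"
  shows "push_face n i \<mu> B =
    (if B \<in> bbsets (n - 1) then \<mu> (face n i -` B \<inter> pair_thick n (2 * R)) else 0)"
proof (cases "B \<in> bbsets (n - 1)")
  case True
  define Rs where "Rs = (SOME R. vanishes_outside n \<mu> (diag_thick n R))"
  have "vanishes_outside n \<mu> (diag_thick n Rs)"
    unfolding Rs_def using v by (rule someI)
  then have "\<mu> (face n i -` B \<inter> pair_thick n (2 * max R Rs)) = \<mu> (face n i -` B \<inter> pair_thick n (2 * Rs))"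
    by (rule coarse_chain_face_vimage_eq[OF proper \<mu> n i True]) simp
  moreover have "\<mu> (face n i -` B \<inter> pair_thick n (2 * max R Rs)) = \<mu> (face n i -` B \<inter> pair_thick n (2 * R))"
    by (rule coarse_chain_face_vimage_eq[OF proper \<mu> n i True v]) simp
  ultimately show ?thesis
    using True by (simp add: push_face_def Rs_def[symmetric])
qed (simp add: push_face_def)

lemma push_face_diff:
  fixes \<mu>1 \<mu>2 :: "(nat \<Rightarrow> 'a::metric_space) set \<Rightarrow> complex"
  assumes proper: "\<forall>(x::'a) r. compact (cball x r)"
    and \<mu>1: "coarse_chain n \<mu>1" and \<mu>2: "coarse_chain n \<mu>2" and n: "0 < n" and i: "i \<le> n"
  shows "push_face n i (\<lambda>A. \<mu>1 A - \<mu>2 A) B = push_face n i \<mu>1 B - push_face n i \<mu>2 B"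
proof -
  obtain R where v1: "vanishes_outside n \<mu>1 (diag_thick n R)" and v2: "vanishes_outside n \<mu>2 (diag_thick n R)"
    by (rule coarse_chain_common_supportE[OF \<mu>1 \<mu>2])
  then have "vanishes_outside n (\<lambda>A. \<mu>1 A - \<mu>2 A) (diag_thick n R)"
    unfolding vanishes_outside_def by simp
  then show ?thesis
    using push_face_eq[OF proper coarse_chain_diff[OF \<mu>1 \<mu>2] n i]
      push_face_eq[OF proper \<mu>1 n i v1] push_face_eq[OF proper \<mu>2 n i v2]
    by simp
qed

lemma bdry_diff:
  fixes \<mu>1 \<mu>2 :: "(nat \<Rightarrow> 'a::metric_space) set \<Rightarrow> complex"
  assumes proper: "\<forall>(x::'a) r. compact (cball x r)"
    and "coarse_chain n \<mu>1" "coarse_chain n \<mu>2" "0 < n"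
  shows "bdry n (\<lambda>A. \<mu>1 A - \<mu>2 A) = (\<lambda>B. bdry n \<mu>1 B - bdry n \<mu>2 B)"
  using push_face_diff[OF assms]
  by (simp add: bdry_def right_diff_distrib sum_subtractf)

section \<open>Permuting the variables\<close>

lemma tup_comp_permutes_iff:
  assumes "\<sigma> permutes {..n}"
  shows "x \<circ> \<sigma> \<in> tup n \<longleftrightarrow> x \<in> tup n"
  using permutes_not_in[OF assms] by (auto simp: tup_def PiE_def extensional_def)

lemma comp_permutes_inv_cancel:
  assumes "\<sigma> permutes S"
  shows "x \<circ> \<sigma> \<circ> inv \<sigma> = x" "x \<circ> inv \<sigma> \<circ> \<sigma> = x"
  using permutes_inv_o[OF assms] by (simp_all add: o_assoc[symmetric])

lemma permute_measurable:
  fixes \<sigma> :: "nat \<Rightarrow> nat"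
  assumes \<sigma>: "\<sigma> permutes {..n}"
  shows "(\<lambda>x. x \<circ> \<sigma>) \<in> measurable (PiM {..n} (\<lambda>_. borel)) (PiM {..n} (\<lambda>_. borel :: 'a::topological_space measure))"
  unfolding comp_def
proof (rule measurable_PiM_single')
  fix j assume "j \<in> {..n}"
  then show "(\<lambda>x::nat \<Rightarrow> 'a. x (\<sigma> j)) \<in> measurable (PiM {..n} (\<lambda>_. borel)) borel"
    using permutes_in_image[OF \<sigma>] by (auto intro!: measurable_component_singleton)
next
  show "(\<lambda>x j. x (\<sigma> j)) \<in> space (PiM {..n} (\<lambda>_. borel)) \<rightarrow> (\<Pi>\<^sub>E j\<in>{..n}. space (borel :: 'a measure))"
  proof (rule Pi_I)
    fix x :: "nat \<Rightarrow> 'a" assume "x \<in> space (PiM {..n} (\<lambda>_. borel))"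
    then have "x \<circ> \<sigma> \<in> tup n" using tup_comp_permutes_iff[OF \<sigma>, of x] by (simp add: space_PiM_borel)
    then show "(\<lambda>j. x (\<sigma> j)) \<in> (\<Pi>\<^sub>E j\<in>{..n}. space (borel :: 'a measure))"
      by (simp add: tup_def comp_def)
  qed
qed

lemma vimage_permute_in_bbsets:
  fixes A :: "(nat \<Rightarrow> 'a::metric_space) set"
  assumes \<sigma>: "\<sigma> permutes {..n}" and A: "A \<in> bbsets n"
  shows "(\<lambda>x. x \<circ> \<sigma>) -` A \<in> bbsets n"
proof -
  have "(\<lambda>x. x \<circ> \<sigma>) -` A \<inter> space (PiM {..n} (\<lambda>_. borel)) \<in> sets (PiM {..n} (\<lambda>_. borel))"
    by (rule measurable_sets[OF permute_measurable[OF \<sigma>]]) (use A in \<open>simp add: bbsets_def tborel_def\<close>)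
  moreover have sub: "(\<lambda>x. x \<circ> \<sigma>) -` A \<subseteq> tup n"
    using A tup_comp_permutes_iff[OF \<sigma>] by (auto simp: bbsets_def tbounded_iff)
  ultimately have "(\<lambda>x. x \<circ> \<sigma>) -` A \<in> tborel n"
    by (simp add: tborel_def space_PiM_borel Int_absorb2)
  moreover obtain p r where pr: "\<forall>y\<in>A. \<forall>i\<le>n. dist (y i) p \<le> r"
    using A by (auto simp: bbsets_def tbounded_iff)
  have "dist (y i) p \<le> r" if "y \<circ> \<sigma> \<in> A" "i \<le> n" for y i
  proof -
    have "inv \<sigma> i \<le> n" using permutes_in_image[OF permutes_inv[OF \<sigma>]] that(2) by simp
    then show ?thesis
      using pr that(1) permutes_inverses(1)[OF \<sigma>, of i] by fastforce
  qed
  ultimately show ?thesis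
    using sub unfolding bbsets_def tbounded_iff by blast
qed

lemma vimage_permute_in_bbsets_iff:
  fixes A :: "(nat \<Rightarrow> 'a::metric_space) set"
  assumes \<sigma>: "\<sigma> permutes {..n}"
  shows "(\<lambda>x. x \<circ> \<sigma>) -` A \<in> bbsets n \<longleftrightarrow> A \<in> bbsets n"
proof
  assume "(\<lambda>x. x \<circ> \<sigma>) -` A \<in> bbsets n"
  then have "(\<lambda>x. x \<circ> inv \<sigma>) -` ((\<lambda>x. x \<circ> \<sigma>) -` A) \<in> bbsets n"
    by (rule vimage_permute_in_bbsets[OF permutes_inv[OF \<sigma>]])
  moreover have "(\<lambda>x. x \<circ> inv \<sigma>) -` ((\<lambda>x. x \<circ> \<sigma>) -` A) = A"
    using comp_permutes_inv_cancel(2)[OF \<sigma>] by auto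
  ultimately show "A \<in> bbsets n" by simp
qed (rule vimage_permute_in_bbsets[OF \<sigma>])

lemma continuous_on_permute: "continuous_on UNIV (\<lambda>x::nat \<Rightarrow> 'a::topological_space. x \<circ> \<sigma>)"
  unfolding comp_def
  by (intro continuous_on_coordinatewise_then_product continuous_on_product_coordinates)

lemma vanishes_outside_perm_chain:
  assumes \<sigma>: "\<sigma> permutes {..n}" and v: "vanishes_outside n \<mu> S" and S: "\<And>x. x \<in> S \<Longrightarrow> x \<circ> \<sigma> \<in> S"
  shows "vanishes_outside n (perm_chain \<sigma> \<mu>) S"
  unfolding vanishes_outside_def
proof (intro ballI impI)
  fix C assume C: "C \<in> bbsets n" "C \<inter> S = {}"
  then have "(\<lambda>x. x \<circ> \<sigma>) -` C \<inter> S = {}" using S by blast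
  then show "perm_chain \<sigma> \<mu> C = 0"
    using v vimage_permute_in_bbsets[OF \<sigma> C(1)] unfolding vanishes_outside_def perm_chain_def by blast
qed

lemma diag_thick_comp_permutes:
  assumes "\<sigma> permutes {..n}" "x \<in> diag_thick n R"
  shows "x \<circ> \<sigma> \<in> diag_thick n R"
  using assms permutes_in_image[OF assms(1)] tup_comp_permutes_iff[OF assms(1)]
  unfolding diag_thick_def by fastforce

lemma PiE_comp_permutes:
  assumes "\<sigma> permutes {..n}" "x \<in> PiE {..n} (\<lambda>_. Z)"
  shows "x \<circ> \<sigma> \<in> PiE {..n} (\<lambda>_. Z)"
  using assms permutes_in_image[OF assms(1)] permutes_not_in[OF assms(1)]
  by (auto simp: PiE_def extensional_def)

lemma cm_countably_additive_perm_chain: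
  fixes \<mu> :: "(nat \<Rightarrow> 'a::metric_space) set \<Rightarrow> complex"
  assumes \<sigma>: "\<sigma> permutes {..n}" and \<mu>: "coarse_chain n \<mu>"
  shows "cm_countably_additive n (perm_chain \<sigma> \<mu>)"
  unfolding cm_countably_additive_def
proof (intro allI impI)
  fix A :: "nat \<Rightarrow> (nat \<Rightarrow> 'a) set"
  assume A: "\<forall>k. A k \<in> bbsets n" "disjoint_family A" "(\<Union>k. A k) \<in> bbsets n"
  let ?p = "\<lambda>x::nat \<Rightarrow> 'a. x \<circ> \<sigma>"
  have U: "?p -` (\<Union>k. A k) = (\<Union>k. ?p -` A k)" by blast
  have "?p -` A k \<in> bbsets n" for k
    using A(1) vimage_permute_in_bbsets[OF \<sigma>] by blast
  moreover have "disjoint_family (\<lambda>k. ?p -` A k)"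
    using A(2) unfolding disjoint_family_on_def by blast
  moreover have "(\<Union>k. ?p -` A k) \<in> bbsets n"
    using vimage_permute_in_bbsets[OF \<sigma> A(3)] by (simp only: U)
  ultimately have "(\<lambda>k. \<mu> (?p -` A k)) sums \<mu> (\<Union>k. ?p -` A k)"
    by (rule coarse_chain_sums[OF \<mu>])
  then show "(\<lambda>k. perm_chain \<sigma> \<mu> (A k)) sums perm_chain \<sigma> \<mu> (\<Union>k. A k)"
    unfolding perm_chain_def by (simp only: U)
qed

lemma cm_regular_perm_chain:
  fixes \<mu> :: "(nat \<Rightarrow> 'a::metric_space) set \<Rightarrow> complex"
  assumes \<sigma>: "\<sigma> permutes {..n}" and \<mu>: "coarse_chain n \<mu>"
  shows "cm_regular n (perm_chain \<sigma> \<mu>)"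
  unfolding cm_regular_def
proof (intro ballI allI impI)
  fix A :: "(nat \<Rightarrow> 'a) set" and e :: real assume A: "A \<in> bbsets n" and "0 < e"
  let ?p = "\<lambda>x::nat \<Rightarrow> 'a. x \<circ> \<sigma>" and ?q = "\<lambda>x::nat \<Rightarrow> 'a. x \<circ> inv \<sigma>"
  have pq: "?q (?p x) = x" "?p (?q x) = x" for x
    by (simp_all add: comp_permutes_inv_cancel[OF \<sigma>])
  obtain K U where KU: "compact K" "K \<subseteq> ?p -` A" "open U" "?p -` A \<subseteq> U"
    "\<And>C. C \<in> bbsets n \<Longrightarrow> C \<subseteq> U - K \<Longrightarrow> cmod (\<mu> C) < e"
    using coarse_chain_regularE[OF \<mu> vimage_permute_in_bbsets[OF \<sigma> A] \<open>0 < e\<close>] by blast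
  have "compact (?p ` K)"
    using compact_continuous_image[OF continuous_on_subset[OF continuous_on_permute] KU(1)] by simp
  moreover have "open (?q -` U)"
    using open_vimage[OF KU(3) continuous_on_permute] by simp
  moreover have "?p ` K \<subseteq> A" using KU(2) by blast
  moreover have "A \<subseteq> ?q -` U"
  proof
    fix y assume "y \<in> A"
    then have "?q y \<in> ?p -` A" using pq(2) by simp
    then show "y \<in> ?q -` U" using KU(4) by blast
  qed
  moreover have "cmod (perm_chain \<sigma> \<mu> C) < e" if "C \<in> bbsets n" "C \<subseteq> ?q -` U - ?p ` K" for C
  proof -
    have "?p -` C \<subseteq> U - K" using that(2) pq by force
    then show ?thesis
      using KU(5) vimage_permute_in_bbsets[OF \<sigma> that(1)] unfolding perm_chain_def by blast
  qed
  ultimately show "\<exists>K U. compact K \<and> K \<subseteq> A \<and> open U \<and> A \<subseteq> U \<and>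
      (\<forall>C\<in>bbsets n. C \<subseteq> U - K \<longrightarrow> cmod (perm_chain \<sigma> \<mu> C) < e)"
    by (intro exI[of _ "?p ` K"] exI[of _ "?q -` U"] conjI ballI impI) auto
qed

lemma coarse_chain_perm_chain:
  fixes \<mu> :: "(nat \<Rightarrow> 'a::metric_space) set \<Rightarrow> complex"
  assumes \<sigma>: "\<sigma> permutes {..n}" and \<mu>: "coarse_chain n \<mu>"
  shows "coarse_chain n (perm_chain \<sigma> \<mu>)"
proof -
  obtain R where "vanishes_outside n \<mu> (diag_thick n R)"
    using coarse_chain_supportE[OF \<mu>] by blast
  then have "vanishes_outside n (perm_chain \<sigma> \<mu>) (diag_thick n R)"
    using vanishes_outside_perm_chain[OF \<sigma>] diag_thick_comp_permutes[OF \<sigma>] by blast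
  then show ?thesis
    using coarse_chain_outside_bbsets[OF \<mu>] vimage_permute_in_bbsets_iff[OF \<sigma>]
      cm_countably_additive_perm_chain[OF \<sigma> \<mu>] cm_regular_perm_chain[OF \<sigma> \<mu>]
    by (intro coarse_chainI[where R = R]) (auto simp: perm_chain_def)
qed

section \<open>Anti-symmetrisation\<close>

definition alt_chain :: "nat \<Rightarrow> ((nat \<Rightarrow> 'a) set \<Rightarrow> complex) \<Rightarrow> (nat \<Rightarrow> 'a) set \<Rightarrow> complex" where
  "alt_chain n \<mu> A = (\<Sum>\<sigma> | \<sigma> permutes {..n}. of_int (sign \<sigma>) * perm_chain \<sigma> \<mu> A)"

lemma perm_chain_comp: "perm_chain \<sigma> (perm_chain \<tau> \<mu>) = perm_chain (\<tau> \<circ> \<sigma>) \<mu>"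
  unfolding perm_chain_def by (simp add: vimage_def o_assoc)

lemma alt_chain_perm_chain:
  assumes \<tau>: "\<tau> permutes {..n}"
  shows "alt_chain n (perm_chain \<tau> \<mu>) A = of_int (sign \<tau>) * alt_chain n \<mu> A"
proof -
  have "alt_chain n \<mu> A
      = (\<Sum>\<sigma> | \<sigma> permutes {..n}. of_int (sign (\<tau> \<circ> \<sigma>)) * perm_chain (\<tau> \<circ> \<sigma>) \<mu> A)"
    unfolding alt_chain_def by (rule setum_permutations_compose_left[OF \<tau>])
  also have "\<dots> = of_int (sign \<tau>) * alt_chain n (perm_chain \<tau> \<mu>) A"
    unfolding alt_chain_def perm_chain_comp sum_distrib_left
  proof (rule sum.cong[OF refl])
    fix \<sigma> assume "\<sigma> \<in> {\<sigma>. \<sigma> permutes {..n}}"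
    then have "sign (\<tau> \<circ> \<sigma>) = sign \<tau> * sign \<sigma>"
      using \<tau> by (intro sign_compose) (auto simp: permutation_permutes)
    then show "of_int (sign (\<tau> \<circ> \<sigma>)) * perm_chain (\<tau> \<circ> \<sigma>) \<mu> A
        = of_int (sign \<tau>) * (of_int (sign \<sigma>) * perm_chain (\<tau> \<circ> \<sigma>) \<mu> A)"
      by (simp add: mult.assoc)
  qed
  finally have "of_int (sign \<tau>) * alt_chain n \<mu> A
      = of_int (sign \<tau>) * of_int (sign \<tau>) * alt_chain n (perm_chain \<tau> \<mu>) A"
    by (simp add: mult.assoc)
  then show ?thesis by (simp flip: of_int_mult)
qed

lemma alt_chain_diff: "alt_chain n (\<lambda>A. \<mu> A - \<nu> A) A = alt_chain n \<mu> A - alt_chain n \<nu> A"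
  unfolding alt_chain_def perm_chain_def by (simp add: right_diff_distrib sum_subtractf)

lemma alt_chain_scale: "alt_chain n (\<lambda>A. c * \<mu> A) A = c * alt_chain n \<mu> A"
  unfolding alt_chain_def perm_chain_def by (simp add: sum_distrib_left mult.left_commute)

lemma alt_chain_sum: "alt_chain n (\<lambda>A. \<Sum>j\<in>J. \<mu> j A) A = (\<Sum>j\<in>J. alt_chain n (\<mu> j) A)"
  unfolding alt_chain_def perm_chain_def by (simp add: sum_distrib_left sum.swap[of _ J])

lemma alt_chain_CX_null:
  assumes "\<nu> \<in> CX_null n \<Y>"
  shows "alt_chain n \<nu> A = 0"
proof -
  obtain k :: nat and \<mu> \<sigma> where \<sigma>: "\<forall>j<k. \<sigma> j permutes {..n}"
    and \<nu>: "\<nu> = (\<lambda>A. \<Sum>j<k. \<mu> j A - of_int (sign (\<sigma> j)) * perm_chain (\<sigma> j) (\<mu> j) A)"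
    using assms unfolding CX_null_def by blast
  have "alt_chain n (\<lambda>A. \<mu> j A - of_int (sign (\<sigma> j)) * perm_chain (\<sigma> j) (\<mu> j) A) A = 0" if "j < k" for j
    using \<sigma> that
    by (simp add: alt_chain_diff alt_chain_scale alt_chain_perm_chain mult.assoc[symmetric]
        flip: of_int_mult)
  then show ?thesis
    unfolding \<nu> alt_chain_sum by simp
qed

lemma CX_null_finite_sumI:
  assumes "finite I" "\<And>i. i \<in> I \<Longrightarrow> \<mu> i \<in> CX n \<Y>" "\<And>i. i \<in> I \<Longrightarrow> \<sigma> i permutes {..n}"
  shows "(\<lambda>A. \<Sum>i\<in>I. \<mu> i A - of_int (sign (\<sigma> i)) * perm_chain (\<sigma> i) (\<mu> i) A) \<in> CX_null n \<Y>"
proof -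
  obtain g where g: "bij_betw g {..<card I} I"
    using ex_bij_betw_nat_finite[OF assms(1)] by (auto simp: atLeast0LessThan)
  then have "(\<lambda>A. \<Sum>i\<in>I. \<mu> i A - of_int (sign (\<sigma> i)) * perm_chain (\<sigma> i) (\<mu> i) A)
      = (\<lambda>A. \<Sum>j<card I. (\<mu> \<circ> g) j A - of_int (sign ((\<sigma> \<circ> g) j)) * perm_chain ((\<sigma> \<circ> g) j) ((\<mu> \<circ> g) j) A)"
    unfolding o_def by (intro ext) (rule sum.reindex_bij_betw[OF g, symmetric])
  moreover have "\<forall>j<card I. (\<mu> \<circ> g) j \<in> CX n \<Y> \<and> (\<sigma> \<circ> g) j permutes {..n}"
    using g assms(2,3) bij_betwE by fastforce
  ultimately show ?thesis
    unfolding CX_null_def by blast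
qed

lemma CX_minus_alt_chain_in_CX_null:
  assumes \<mu>: "\<mu> \<in> CX n \<Y>"
  shows "(\<lambda>A. \<mu> A - alt_chain n \<mu> A / fact (Suc n)) \<in> CX_null n \<Y>"
proof -
  let ?P = "{\<sigma>. \<sigma> permutes {..n}}"
  define c :: complex where "c = 1 / fact (Suc n)"
  have card: "card ?P = fact (Suc n)"
    by (simp add: card_permutations)
  have "(\<lambda>A. \<Sum>\<sigma>\<in>?P. c * \<mu> A - of_int (sign \<sigma>) * perm_chain \<sigma> (\<lambda>A. c * \<mu> A) A) \<in> CX_null n \<Y>"
    using CX_scale[OF \<mu>] finite_permutations[of "{..n}"]
    by (intro CX_null_finite_sumI[where \<mu> = "\<lambda>_ A. c * \<mu> A" and \<sigma> = id, simplified]) auto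
  moreover have "(\<Sum>\<sigma>\<in>?P. c * \<mu> A - of_int (sign \<sigma>) * perm_chain \<sigma> (\<lambda>A. c * \<mu> A) A)
      = \<mu> A - alt_chain n \<mu> A / fact (Suc n)" for A
  proof -
    have "(\<Sum>\<sigma>\<in>?P. c * \<mu> A - of_int (sign \<sigma>) * perm_chain \<sigma> (\<lambda>A. c * \<mu> A) A)
        = of_nat (card ?P) * (c * \<mu> A) - c * alt_chain n \<mu> A"
      by (simp add: sum_subtractf alt_chain_def perm_chain_def sum_distrib_left mult.left_commute)
    then show ?thesis
      using card by (simp add: c_def field_simps del: fact_Suc)
  qed
  ultimately show ?thesis by simp
qed

lemma alt_chain_in_CX:
  assumes "\<mu> \<in> CX n \<Y>"
  shows "(\<lambda>A. c * alt_chain n \<mu> A) \<in> CX n \<Y>"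
proof -
  obtain Y where Y: "Y \<in> \<Y>" and \<mu>: "coarse_chain n \<mu>" and v: "vanishes_outside n \<mu> (PiE {..n} (\<lambda>_. Y))"
    using assms unfolding CX_def by blast
  let ?P = "{\<sigma>. \<sigma> permutes {..n}}"
  have eq: "(\<lambda>A. c * alt_chain n \<mu> A) = (\<lambda>A. \<Sum>\<sigma>\<in>?P. (c * of_int (sign \<sigma>)) * perm_chain \<sigma> \<mu> A)"
    by (simp add: alt_chain_def sum_distrib_left mult.assoc)
  have "coarse_chain n (\<lambda>A. \<Sum>\<sigma>\<in>?P. (c * of_int (sign \<sigma>)) * perm_chain \<sigma> \<mu> A)"
    using finite_permutations[of "{..n}"]
    by (intro coarse_chain_sum coarse_chain_scale coarse_chain_perm_chain[OF _ \<mu>]) auto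
  moreover have "vanishes_outside n (perm_chain \<sigma> \<mu>) (PiE {..n} (\<lambda>_. Y))" if "\<sigma> \<in> ?P" for \<sigma>
    using that vanishes_outside_perm_chain[OF _ v PiE_comp_permutes] by blast
  then have "vanishes_outside n (\<lambda>A. \<Sum>\<sigma>\<in>?P. (c * of_int (sign \<sigma>)) * perm_chain \<sigma> \<mu> A) (PiE {..n} (\<lambda>_. Y))"
    unfolding vanishes_outside_def by simp
  ultimately show ?thesis
    unfolding eq CX_def using Y by blast
qed

lemma CX_null_iff_alt_chain_eq_0:
  assumes "\<mu> \<in> CX n \<Y>"
  shows "\<mu> \<in> CX_null n \<Y> \<longleftrightarrow> (\<forall>A. alt_chain n \<mu> A = 0)"
  using alt_chain_CX_null CX_minus_alt_chain_in_CX_null[OF assms] by auto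

lemma CX_null_mono: "CX n \<Y> \<subseteq> CX n \<Y>' \<Longrightarrow> CX_null n \<Y> \<subseteq> CX_null n \<Y>'"
  unfolding CX_null_def by blast

lemma zero_in_CX_null: "(\<lambda>_. 0) \<in> CX_null n \<Y>"
  unfolding CX_null_def by (intro CollectI exI[of _ "0::nat"]) simp

lemma CX_null_diff:
  assumes "\<nu>1 \<in> CX_null n \<Y>" "\<nu>2 \<in> CX_null n \<Y>"
  shows "(\<lambda>A. \<nu>1 A - \<nu>2 A) \<in> CX_null n \<Y>"
proof -
  obtain k1 :: nat and \<mu>1 \<sigma>1 where h1: "\<forall>j<k1. \<mu>1 j \<in> CX n \<Y> \<and> \<sigma>1 j permutes {..n}"
    and \<nu>1: "\<nu>1 = (\<lambda>A. \<Sum>j<k1. \<mu>1 j A - of_int (sign (\<sigma>1 j)) * perm_chain (\<sigma>1 j) (\<mu>1 j) A)"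
    using assms(1) unfolding CX_null_def by blast
  obtain k2 :: nat and \<mu>2 \<sigma>2 where h2: "\<forall>j<k2. \<mu>2 j \<in> CX n \<Y> \<and> \<sigma>2 j permutes {..n}"
    and \<nu>2: "\<nu>2 = (\<lambda>A. \<Sum>j<k2. \<mu>2 j A - of_int (sign (\<sigma>2 j)) * perm_chain (\<sigma>2 j) (\<mu>2 j) A)"
    using assms(2) unfolding CX_null_def by blast
  define \<mu> where "\<mu> = case_sum \<mu>1 (\<lambda>j A. - \<mu>2 j A)"
  define \<sigma> where "\<sigma> = case_sum \<sigma>1 \<sigma>2"
  have "(\<lambda>A. \<Sum>i\<in>{..<k1} <+> {..<k2}. \<mu> i A - of_int (sign (\<sigma> i)) * perm_chain (\<sigma> i) (\<mu> i) A)
      \<in> CX_null n \<Y>"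
    using h1 h2 CX_scale[of "\<mu>2 _" n \<Y> "-1"]
    by (intro CX_null_finite_sumI) (auto simp: \<mu>_def \<sigma>_def)
  moreover have "(\<lambda>A. \<Sum>i\<in>{..<k1} <+> {..<k2}. \<mu> i A - of_int (sign (\<sigma> i)) * perm_chain (\<sigma> i) (\<mu> i) A)
      = (\<lambda>A. \<nu>1 A - \<nu>2 A)"
    unfolding \<nu>1 \<nu>2
    by (simp add: sum.Plus \<mu>_def \<sigma>_def perm_chain_def sum_subtractf sum_negf fun_eq_iff)
  ultimately show ?thesis by simp
qed

lemma CX_null_diff_fam_Un:
  assumes "big_family \<X>" "big_family \<Y>" "\<nu>1 \<in> CX_null n \<X>" "\<nu>2 \<in> CX_null n \<Y>"
  shows "(\<lambda>A. \<nu>1 A - \<nu>2 A) \<in> CX_null n (fam_Un \<X> \<Y>)"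
proof -
  have "CX n \<X> \<subseteq> CX n (fam_Un \<X> \<Y>)" "CX n \<Y> \<subseteq> CX n (fam_Un \<X> \<Y>)"
    using CX_subset_fam_Un[of \<Y> n \<X>] CX_subset_fam_Un[of \<X> n \<Y>] assms(1,2)
    by (auto simp: big_family_def fam_Un_commute)
  then show ?thesis
    using CX_null_mono CX_null_diff assms(3,4) by blast
qed

lemma CX_fam_Int_common_representative:
  fixes \<X> \<Y> :: "'a::metric_space set set"
  assumes bX: "big_family \<X>" and bY: "big_family \<Y>"
    and \<mu>1: "\<mu>1 \<in> CX n \<X>" and \<mu>2: "\<mu>2 \<in> CX n \<Y>"
    and null: "(\<lambda>A. \<mu>1 A - \<mu>2 A) \<in> CX_null n (fam_Un \<X> \<Y>)"
  shows "\<exists>\<mu>\<in>CX n (fam_Int \<X> \<Y>). (\<lambda>A. \<mu>1 A - \<mu> A) \<in> CX_null n \<X> \<and> (\<lambda>A. \<mu>2 A - \<mu> A) \<in> CX_null n \<Y>"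
proof -
  have alt: "alt_chain n \<mu>1 A = alt_chain n \<mu>2 A" for A
    using alt_chain_CX_null[OF null, of A] by (simp add: alt_chain_diff)
  define \<mu> where "\<mu> = (\<lambda>A. alt_chain n \<mu>1 A / fact (Suc n))"
  have \<mu>_eq: "\<mu> = (\<lambda>A. alt_chain n \<mu>2 A / fact (Suc n))"
    unfolding \<mu>_def alt ..
  have "\<mu> = (\<lambda>A. inverse (fact (Suc n)) * alt_chain n \<mu>1 A)"
    unfolding \<mu>_def by (simp add: divide_inverse_commute del: fact_Suc)
  then have "\<mu> \<in> CX n \<X>" "\<mu> \<in> CX n \<Y>"
    using alt_chain_in_CX[OF \<mu>1] alt_chain_in_CX[OF \<mu>2] alt by simp_all
  then have "\<mu> \<in> CX n (fam_Int \<X> \<Y>)" using CX_fam_Int[OF bX bY] by blast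
  moreover have "(\<lambda>A. \<mu>1 A - \<mu> A) \<in> CX_null n \<X>"
    unfolding \<mu>_def by (rule CX_minus_alt_chain_in_CX_null[OF \<mu>1])
  moreover have "(\<lambda>A. \<mu>2 A - \<mu> A) \<in> CX_null n \<Y>"
    unfolding \<mu>_eq by (rule CX_minus_alt_chain_in_CX_null[OF \<mu>2])
  ultimately show ?thesis by blast
qed

theorem proposition3p10:
  fixes \<X> \<Y> :: "'a::metric_space set set"
  assumes proper: "\<forall>(x::'a) r. compact (cball x r)"
    and bX: "big_family \<X>" and bY: "big_family \<Y>"
  shows
    \<comment> \<open>plain coarse chains: well-defined maps, exactness in each degree, chain maps\<close>
    "(\<forall>n.
       (\<forall>\<mu>\<in>CX n (fam_Int \<X> \<Y>). \<mu> \<in> CX n \<X> \<and> \<mu> \<in> CX n \<Y>) \<and>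
       (\<forall>\<mu>1\<in>CX n \<X>. \<forall>\<mu>2\<in>CX n \<Y>. (\<lambda>A. \<mu>1 A - \<mu>2 A) \<in> CX n (fam_Un \<X> \<Y>)) \<and>
       (\<forall>\<mu>\<in>CX n (fam_Int \<X> \<Y>). (\<mu>, \<mu>) = ((\<lambda>_. 0), (\<lambda>_. 0)) \<longrightarrow> \<mu> = (\<lambda>_. 0)) \<and>
       (\<forall>\<mu>\<in>CX n (fam_Int \<X> \<Y>). (\<lambda>A. \<mu> A - \<mu> A) = (\<lambda>_. 0)) \<and>
       (\<forall>\<mu>1\<in>CX n \<X>. \<forall>\<mu>2\<in>CX n \<Y>. (\<lambda>A. \<mu>1 A - \<mu>2 A) = (\<lambda>_. 0) \<longrightarrow>
          (\<exists>\<mu>\<in>CX n (fam_Int \<X> \<Y>). (\<mu>1, \<mu>2) = (\<mu>, \<mu>))) \<and>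
       (\<forall>\<nu>\<in>CX n (fam_Un \<X> \<Y>). \<exists>\<mu>1\<in>CX n \<X>. \<exists>\<mu>2\<in>CX n \<Y>. \<nu> = (\<lambda>A. \<mu>1 A - \<mu>2 A)) \<and>
       (0 < n \<longrightarrow> (\<forall>\<mu>1\<in>CX n \<X>. \<forall>\<mu>2\<in>CX n \<Y>.
          bdry n (\<lambda>A. \<mu>1 A - \<mu>2 A) = (\<lambda>B. bdry n \<mu>1 B - bdry n \<mu>2 B))))
   \<and>
    \<comment> \<open>anti-symmetric quotients CX^alpha = CX / CX_null, via representatives\<close>
    (\<forall>n.
       CX_null n (fam_Int \<X> \<Y>) \<subseteq> CX_null n \<X> \<inter> CX_null n \<Y> \<and>
       (\<forall>\<mu>1\<in>CX_null n \<X>. \<forall>\<mu>2\<in>CX_null n \<Y>. (\<lambda>A. \<mu>1 A - \<mu>2 A) \<in> CX_null n (fam_Un \<X> \<Y>)) \<and>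
       (\<forall>\<mu>\<in>CX n (fam_Int \<X> \<Y>). \<mu> \<in> CX_null n \<X> \<and> \<mu> \<in> CX_null n \<Y> \<longrightarrow>
          \<mu> \<in> CX_null n (fam_Int \<X> \<Y>)) \<and>
       (\<forall>\<mu>1\<in>CX n \<X>. \<forall>\<mu>2\<in>CX n \<Y>. (\<lambda>A. \<mu>1 A - \<mu>2 A) \<in> CX_null n (fam_Un \<X> \<Y>) \<longrightarrow>
          (\<exists>\<mu>\<in>CX n (fam_Int \<X> \<Y>). (\<lambda>A. \<mu>1 A - \<mu> A) \<in> CX_null n \<X> \<and>
                                     (\<lambda>A. \<mu>2 A - \<mu> A) \<in> CX_null n \<Y>)) \<and>
       (\<forall>\<nu>\<in>CX n (fam_Un \<X> \<Y>). \<exists>\<mu>1\<in>CX n \<X>. \<exists>\<mu>2\<in>CX n \<Y>.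
          (\<lambda>A. \<nu> A - (\<mu>1 A - \<mu>2 A)) \<in> CX_null n (fam_Un \<X> \<Y>)))"
proof (intro allI conjI)
  fix n
  note CX_Int = CX_fam_Int[OF bX bY, of n]
  show "\<forall>\<mu>\<in>CX n (fam_Int \<X> \<Y>). \<mu> \<in> CX n \<X> \<and> \<mu> \<in> CX n \<Y>"
    using CX_Int by blast
  show "\<forall>\<mu>1\<in>CX n \<X>. \<forall>\<mu>2\<in>CX n \<Y>. (\<lambda>A. \<mu>1 A - \<mu>2 A) \<in> CX n (fam_Un \<X> \<Y>)"
    using CX_diff_fam_Un by blast
  show "\<forall>\<mu>\<in>CX n (fam_Int \<X> \<Y>). (\<mu>, \<mu>) = ((\<lambda>_. 0), (\<lambda>_. 0)) \<longrightarrow> \<mu> = (\<lambda>_. 0)"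
    and "\<forall>\<mu>\<in>CX n (fam_Int \<X> \<Y>). (\<lambda>A. \<mu> A - \<mu> A) = (\<lambda>_. 0)"
    by simp_all
  show "\<forall>\<mu>1\<in>CX n \<X>. \<forall>\<mu>2\<in>CX n \<Y>. (\<lambda>A. \<mu>1 A - \<mu>2 A) = (\<lambda>_. 0) \<longrightarrow>
      (\<exists>\<mu>\<in>CX n (fam_Int \<X> \<Y>). (\<mu>1, \<mu>2) = (\<mu>, \<mu>))"
  proof (intro ballI impI)
    fix \<mu>1 \<mu>2 assume "\<mu>1 \<in> CX n \<X>" "\<mu>2 \<in> CX n \<Y>" "(\<lambda>A. \<mu>1 A - \<mu>2 A) = (\<lambda>_. 0)"
    moreover from this(3) have "\<mu>1 = \<mu>2" by (simp add: fun_eq_iff)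
    ultimately show "\<exists>\<mu>\<in>CX n (fam_Int \<X> \<Y>). (\<mu>1, \<mu>2) = (\<mu>, \<mu>)" using CX_Int by blast
  qed
  show "\<forall>\<nu>\<in>CX n (fam_Un \<X> \<Y>). \<exists>\<mu>1\<in>CX n \<X>. \<exists>\<mu>2\<in>CX n \<Y>. \<nu> = (\<lambda>A. \<mu>1 A - \<mu>2 A)"
    using CX_fam_Un_decompose[OF bX bY] by blast
  show "0 < n \<longrightarrow> (\<forall>\<mu>1\<in>CX n \<X>. \<forall>\<mu>2\<in>CX n \<Y>.
      bdry n (\<lambda>A. \<mu>1 A - \<mu>2 A) = (\<lambda>B. bdry n \<mu>1 B - bdry n \<mu>2 B))"
    using bdry_diff[OF proper] CX_imp_coarse_chain by blast
  show "CX_null n (fam_Int \<X> \<Y>) \<subseteq> CX_null n \<X> \<inter> CX_null n \<Y>"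
    using CX_null_mono CX_fam_Int_subset by (meson le_inf_iff)
  show "\<forall>\<mu>1\<in>CX_null n \<X>. \<forall>\<mu>2\<in>CX_null n \<Y>. (\<lambda>A. \<mu>1 A - \<mu>2 A) \<in> CX_null n (fam_Un \<X> \<Y>)"
    using CX_null_diff_fam_Un[OF bX bY] by blast
  show "\<forall>\<mu>\<in>CX n (fam_Int \<X> \<Y>). \<mu> \<in> CX_null n \<X> \<and> \<mu> \<in> CX_null n \<Y> \<longrightarrow>
      \<mu> \<in> CX_null n (fam_Int \<X> \<Y>)"
    using CX_null_iff_alt_chain_eq_0 CX_Int by blast
  show "\<forall>\<mu>1\<in>CX n \<X>. \<forall>\<mu>2\<in>CX n \<Y>. (\<lambda>A. \<mu>1 A - \<mu>2 A) \<in> CX_null n (fam_Un \<X> \<Y>) \<longrightarrow>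
      (\<exists>\<mu>\<in>CX n (fam_Int \<X> \<Y>). (\<lambda>A. \<mu>1 A - \<mu> A) \<in> CX_null n \<X> \<and> (\<lambda>A. \<mu>2 A - \<mu> A) \<in> CX_null n \<Y>)"
    using CX_fam_Int_common_representative[OF bX bY] by blast
  show "\<forall>\<nu>\<in>CX n (fam_Un \<X> \<Y>). \<exists>\<mu>1\<in>CX n \<X>. \<exists>\<mu>2\<in>CX n \<Y>.
      (\<lambda>A. \<nu> A - (\<mu>1 A - \<mu>2 A)) \<in> CX_null n (fam_Un \<X> \<Y>)"
  proof
    fix \<nu> assume "\<nu> \<in> CX n (fam_Un \<X> \<Y>)"
    then obtain \<mu>1 \<mu>2 where "\<mu>1 \<in> CX n \<X>" "\<mu>2 \<in> CX n \<Y>" "\<nu> = (\<lambda>A. \<mu>1 A - \<mu>2 A)"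
      using CX_fam_Un_decompose[OF bX bY] by blast
    then show "\<exists>\<mu>1\<in>CX n \<X>. \<exists>\<mu>2\<in>CX n \<Y>. (\<lambda>A. \<nu> A - (\<mu>1 A - \<mu>2 A)) \<in> CX_null n (fam_Un \<X> \<Y>)"
      by (intro bexI[of _ \<mu>1] bexI[of _ \<mu>2]) (simp_all add: zero_in_CX_null)
  qed
qed

end
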